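(* Let $\Omega\subset\mathbb{C}^n$ be a bounded domain, let $\mathcal R$ and $\mathcal R'$ be quasi-free Hilbert modules over $A(\Omega)$ with generating sets $\{f_i\}_{i=1}^m$ and $\{g_i\}_{i=1}^m$, $1\le m<\infty$, and let $X:\mathcal R\to\mathcal R'$ be a module map. Then there exists $\Psi=(\psi_{ij})\in\mathrm{Hol}_m(\Omega)$ such that \[Xf_i=\sum_{j=1}^m\psi_{ij}g_j\quad\text{for }1\le i\le m.\]
   Context: $A(\Omega)$ is the closure, in the supremum norm on $\Omega$, of the set of functions holomorphic on some neighbourhood of $\overline\Omega$; $\ell^2_m$ is the $m$-dimensional Hilbert space and $\mathrm{Hol}_m(\Omega)$ is the space of holomorphic $\mathcal L(\ell^2_m)$-valued functions on $\Omega$ (holomorphic $m\times m$ matrix functions). A quasi-free Hilbert module of rank $m$ over $A(\Omega)$ is a Hilbert space $\mathcal R$ obtained as the completion of $A(\Omega)\otimes\ell^2_m$ (regarded as $\ell^2_m$-valued holomorphic functions on $\Omega$) with respect to an inner product such that: (1) for each $z\in\Omega$ evaluation at $z$ is bounded, with norm locally uniformly bounded in $z$; (2) $\|\varphi F\|_{\mathcal R}\le\|\varphi\|_{A(\Omega)}\|F\|_{\mathcal R}$; (3) if $(F_i)$ is Cauchy in $\mathcal R$-norm, then $F_i(z)\to0$ for all $z$ iff $\|F_i\|_{\mathcal R}\to0$. $A(\Omega)$ acts by multiplication. A generating set is $\{f_1,\dots,f_m\}\subset\mathcal R$ whose $A(\Omega)$-multiples span a dense subspace and whose localizations at each $z\in\Omega$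 form a basis of the localization $\mathcal R/\mathcal R_z$ ($\mathcal R_z$ the closure of $\{\varphi h:\varphi(z)=0\}$); then $\{f_i(z)\}$ is a basis of $\ell^2_m$ for each $z$. A module map is a bounded linear $X$ with $X(\varphi h)=\varphi X(h)$. In the identity $Xf_i=\sum_j\psi_{ij}g_j$ the right side means the function $z\mapsto\sum_j\psi_{ij}(z)g_j(z)$. *)

theory Defs
  imports "HOL-Analysis.Analysis"
begin

text \<open>Points of C^n are vectors of type complex^'n; l^2_m is complex^'m (Euclidean norm).\<close>

definition hol_sc :: "(complex^'n) set \<Rightarrow> (complex^'n \<Rightarrow> complex) \<Rightarrow> bool" where
  "hol_sc U f \<longleftrightarrow>
     (\<forall>z\<in>U. \<exists>D. (f has_derivative D) (at z) \<and> (\<forall>c x. D (c *s x) = c * D x))"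

definition hol_vec :: "(complex^'n) set \<Rightarrow> (complex^'n \<Rightarrow> complex^'m) \<Rightarrow> bool" where
  "hol_vec U f \<longleftrightarrow> (\<forall>i. hol_sc U (\<lambda>z. f z $ i))"

definition hol_mat :: "(complex^'n) set \<Rightarrow> (complex^'n \<Rightarrow> complex^'m^'m) \<Rightarrow> bool" where
  "hol_mat U F \<longleftrightarrow> (\<forall>i j. hol_sc U (\<lambda>z. F z $ i $ j))"

definition bounded_domain :: "(complex^'n) set \<Rightarrow> bool" where
  "bounded_domain \<Omega> \<longleftrightarrow> open \<Omega> \<and> connected \<Omega> \<and> bounded \<Omega> \<and> \<Omega> \<noteq> {}"

text \<open>The algebra A(Omega): uniform limits on Omega of functions holomorphic on some
  neighbourhood of the closure of Omega (values off Omega are irrelevant).\<close>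
definition alg_A :: "(complex^'n) set \<Rightarrow> (complex^'n \<Rightarrow> complex) set" where
  "alg_A \<Omega> = {\<phi>. \<exists>\<psi>::nat \<Rightarrow> complex^'n \<Rightarrow> complex.
       (\<forall>k. \<exists>U. open U \<and> closure \<Omega> \<subseteq> U \<and> hol_sc U (\<psi> k)) \<and>
       (\<forall>e>0. \<exists>N. \<forall>k\<ge>N. \<forall>z\<in>\<Omega>. norm (\<psi> k z - \<phi> z) < e)}"

definition normA :: "(complex^'n) set \<Rightarrow> (complex^'n \<Rightarrow> complex) \<Rightarrow> real" where
  "normA \<Omega> \<phi> = (SUP z\<in>\<Omega>. norm (\<phi> z))"

text \<open>Module action: multiplication by a scalar function, restricted to Omega
  (elements of the modules are functions on Omega, extended by 0 outside).\<close>
definition mult :: "(complex^'n) set \<Rightarrow> (complex^'n \<Rightarrow> complex) \<Rightarrow> (complex^'n \<Rightarrow> complex^'m)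
                    \<Rightarrow> (complex^'n \<Rightarrow> complex^'m)" where
  "mult \<Omega> \<phi> h = (\<lambda>z. if z \<in> \<Omega> then \<phi> z *s h z else 0)"

text \<open>A(Omega) tensor l^2_m, regarded as l^2_m-valued functions on Omega.\<close>
definition alg_tensor :: "(complex^'n) set \<Rightarrow> (complex^'n \<Rightarrow> complex^'m) set" where
  "alg_tensor \<Omega> = {h. \<exists>\<phi>::'m \<Rightarrow> complex^'n \<Rightarrow> complex. (\<forall>i. \<phi> i \<in> alg_A \<Omega>) \<and>
       h = (\<lambda>z. if z \<in> \<Omega> then (\<chi> i. \<phi> i z) else 0)}"

definition hnorm :: "(('n \<Rightarrow> 'm) \<Rightarrow> ('n \<Rightarrow> 'm) \<Rightarrow> complex) \<Rightarrow> ('n \<Rightarrow> 'm) \<Rightarrow> real" where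
  "hnorm ip f = sqrt (Re (ip f f))"

text \<open>A quasi-free Hilbert module of rank m over A(Omega): a Hilbert space (R, ip) of
  l^2_m-valued holomorphic functions on Omega (extended by 0 off Omega) which is the
  completion of A(Omega) tensor l^2_m, satisfying conditions (1)--(3).\<close>
definition quasi_free ::
  "(complex^'n) set \<Rightarrow> (complex^'n \<Rightarrow> complex^'m) set
     \<Rightarrow> ((complex^'n \<Rightarrow> complex^'m) \<Rightarrow> (complex^'n \<Rightarrow> complex^'m) \<Rightarrow> complex) \<Rightarrow> bool" where
  "quasi_free \<Omega> R ip \<longleftrightarrow>
     \<comment> \<open>R is a complex vector space of holomorphic functions on Omega, zero off Omega\<close>
     (\<forall>h\<in>R. hol_vec \<Omega> h \<and> (\<forall>z. z \<notin> \<Omega> \<longrightarrow> h z = 0)) \<and>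
     (\<lambda>z. 0) \<in> R \<and>
     (\<forall>f\<in>R. \<forall>g\<in>R. (\<lambda>z. f z + g z) \<in> R) \<and>
     (\<forall>f\<in>R. \<forall>a::complex. (\<lambda>z. a *s f z) \<in> R) \<and>
     \<comment> \<open>ip is an inner product on R\<close>
     (\<forall>f\<in>R. \<forall>g\<in>R. \<forall>h\<in>R. ip (\<lambda>z. f z + g z) h = ip f h + ip g h) \<and>
     (\<forall>f\<in>R. \<forall>h\<in>R. \<forall>a. ip (\<lambda>z. a *s f z) h = a * ip f h) \<and>
     (\<forall>f\<in>R. \<forall>g\<in>R. ip g f = cnj (ip f g)) \<and>
     (\<forall>f\<in>R. Im (ip f f) = 0 \<and> Re (ip f f) \<ge> 0) \<and>
     (\<forall>f\<in>R. ip f f = 0 \<longrightarrow> f = (\<lambda>z. 0)) \<and>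
     \<comment> \<open>completeness\<close>
     (\<forall>F::nat \<Rightarrow> (complex^'n \<Rightarrow> complex^'m). (\<forall>k. F k \<in> R) \<longrightarrow>
        (\<forall>e>0. \<exists>N. \<forall>k\<ge>N. \<forall>l\<ge>N. hnorm ip (\<lambda>z. F k z - F l z) < e) \<longrightarrow>
        (\<exists>h\<in>R. (\<lambda>k. hnorm ip (\<lambda>z. F k z - h z)) \<longlonglongrightarrow> 0)) \<and>
     \<comment> \<open>R is the completion of A(Omega) tensor l^2_m\<close>
     alg_tensor \<Omega> \<subseteq> R \<and>
     (\<forall>h\<in>R. \<forall>e>0. \<exists>p\<in>alg_tensor \<Omega>. hnorm ip (\<lambda>z. h z - p z) < e) \<and>
     \<comment> \<open>(1) evaluation bounded, locally uniformly in z\<close>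
     (\<forall>z\<in>\<Omega>. \<exists>r>0. \<exists>C. \<forall>w\<in>\<Omega> \<inter> ball z r. \<forall>h\<in>R. norm (h w) \<le> C * hnorm ip h) \<and>
     \<comment> \<open>(2) contractive module action\<close>
     (\<forall>\<phi>\<in>alg_A \<Omega>. \<forall>h\<in>R. mult \<Omega> \<phi> h \<in> R \<and>
        hnorm ip (mult \<Omega> \<phi> h) \<le> normA \<Omega> \<phi> * hnorm ip h) \<and>
     \<comment> \<open>(3)\<close>
     (\<forall>F::nat \<Rightarrow> (complex^'n \<Rightarrow> complex^'m). (\<forall>k. F k \<in> R) \<longrightarrow>
        (\<forall>e>0. \<exists>N. \<forall>k\<ge>N. \<forall>l\<ge>N. hnorm ip (\<lambda>z. F k z - F l z) < e) \<longrightarrow>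
        ((\<forall>z\<in>\<Omega>. (\<lambda>k. F k z) \<longlonglongrightarrow> 0) \<longleftrightarrow> (\<lambda>k. hnorm ip (F k)) \<longlonglongrightarrow> 0))"

definition loc_sub ::
  "(complex^'n) set \<Rightarrow> (complex^'n \<Rightarrow> complex^'m) set
     \<Rightarrow> ((complex^'n \<Rightarrow> complex^'m) \<Rightarrow> (complex^'n \<Rightarrow> complex^'m) \<Rightarrow> complex)
     \<Rightarrow> complex^'n \<Rightarrow> (complex^'n \<Rightarrow> complex^'m) set" where
  "loc_sub \<Omega> R ip z = {h\<in>R. \<forall>e>0. \<exists>k::nat. \<exists>\<phi>s hs.
      (\<forall>l<k. \<phi>s l \<in> alg_A \<Omega> \<and> \<phi>s l z = 0 \<and> hs l \<in> R) \<and>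
      hnorm ip (\<lambda>w. h w - (\<Sum>l<k. mult \<Omega> (\<phi>s l) (hs l) w)) < e}"

definition generating_set ::
  "(complex^'n) set \<Rightarrow> (complex^'n \<Rightarrow> complex^'m) set
     \<Rightarrow> ((complex^'n \<Rightarrow> complex^'m) \<Rightarrow> (complex^'n \<Rightarrow> complex^'m) \<Rightarrow> complex)
     \<Rightarrow> ('m \<Rightarrow> (complex^'n \<Rightarrow> complex^'m)) \<Rightarrow> bool" where
  "generating_set \<Omega> R ip f \<longleftrightarrow>
     (\<forall>i. f i \<in> R) \<and>
     \<comment> \<open>A(Omega)-multiples span a dense subspace\<close>
     (\<forall>h\<in>R. \<forall>e>0. \<exists>\<phi>::'m \<Rightarrow> complex^'n \<Rightarrow> complex. (\<forall>i. \<phi> i \<in> alg_A \<Omega>) \<and>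
         hnorm ip (\<lambda>w. h w - (\<Sum>i\<in>UNIV. mult \<Omega> (\<phi> i) (f i) w)) < e) \<and>
     \<comment> \<open>localizations at each z form a basis of R / R_z\<close>
     (\<forall>z\<in>\<Omega>.
        (\<forall>c::'m \<Rightarrow> complex. (\<lambda>w. \<Sum>i\<in>UNIV. c i *s f i w) \<in> loc_sub \<Omega> R ip z \<longrightarrow> (\<forall>i. c i = 0)) \<and>
        (\<forall>h\<in>R. \<exists>c::'m \<Rightarrow> complex. (\<lambda>w. h w - (\<Sum>i\<in>UNIV. c i *s f i w)) \<in> loc_sub \<Omega> R ip z))"

definition module_map ::
  "(complex^'n) set \<Rightarrow> (complex^'n \<Rightarrow> complex^'m) set
     \<Rightarrow> ((complex^'n \<Rightarrow> complex^'m) \<Rightarrow> (complex^'n \<Rightarrow> complex^'m) \<Rightarrow> complex)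
     \<Rightarrow> (complex^'n \<Rightarrow> complex^'m) set
     \<Rightarrow> ((complex^'n \<Rightarrow> complex^'m) \<Rightarrow> (complex^'n \<Rightarrow> complex^'m) \<Rightarrow> complex)
     \<Rightarrow> ((complex^'n \<Rightarrow> complex^'m) \<Rightarrow> (complex^'n \<Rightarrow> complex^'m)) \<Rightarrow> bool" where
  "module_map \<Omega> R ip R' ip' X \<longleftrightarrow>
     (\<forall>h\<in>R. X h \<in> R') \<and>
     (\<forall>f\<in>R. \<forall>g\<in>R. X (\<lambda>z. f z + g z) = (\<lambda>z. X f z + X g z)) \<and>
     (\<forall>f\<in>R. \<forall>a::complex. X (\<lambda>z. a *s f z) = (\<lambda>z. a *s X f z)) \<and>
     (\<exists>C. \<forall>h\<in>R. hnorm ip' (X h) \<le> C * hnorm ip h) \<and>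
     (\<forall>\<phi>\<in>alg_A \<Omega>. \<forall>h\<in>R. X (mult \<Omega> \<phi> h) = mult \<Omega> \<phi> (X h))"

end

theory Submission
  imports Defs
begin

text \<open>Evaluation at a point z of Omega is bounded, and every product phi h with phi(z) = 0
  vanishes at z, so the whole subspace R'_z vanishes at z. The localization condition on the
  generating set {g_j} therefore says that the vectors g_j(z) span l^2_m, i.e. the matrix G(z)
  with columns g_j(z) is invertible for every z in Omega. Its entries and the coordinates of
  X f_i are holomorphic, so solving G(z) Psi_i(z) = (X f_i)(z) by Cramer's rule yields a
  holomorphic Psi.\<close>

lemma hol_sc_const: "hol_sc U (\<lambda>z. c)"
  unfolding hol_sc_def by (auto intro!: exI[of _ "\<lambda>x. 0"])

lemma hol_sc_add:
  assumes "hol_sc U f" "hol_sc U g"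
  shows "hol_sc U (\<lambda>z. f z + g z)"
  unfolding hol_sc_def
proof
  fix z assume "z \<in> U"
  with assms obtain Df Dg where
    "(f has_derivative Df) (at z)" "\<forall>c x. Df (c *s x) = c * Df x"
    "(g has_derivative Dg) (at z)" "\<forall>c x. Dg (c *s x) = c * Dg x"
    unfolding hol_sc_def by meson
  then show "\<exists>D. ((\<lambda>z. f z + g z) has_derivative D) (at z) \<and> (\<forall>c x. D (c *s x) = c * D x)"
    by (intro exI[of _ "\<lambda>x. Df x + Dg x"]) (auto intro: has_derivative_add simp: distrib_left)
qed

lemma hol_sc_mult:
  assumes "hol_sc U f" "hol_sc U g"
  shows "hol_sc U (\<lambda>z. f z * g z)"
  unfolding hol_sc_def
proof
  fix z assume "z \<in> U"
  with assms obtain Df Dg where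
    Df: "(f has_derivative Df) (at z)" "\<forall>c x. Df (c *s x) = c * Df x" and
    Dg: "(g has_derivative Dg) (at z)" "\<forall>c x. Dg (c *s x) = c * Dg x"
    unfolding hol_sc_def by meson
  have "((\<lambda>z. f z * g z) has_derivative (\<lambda>x. f z * Dg x + Df x * g z)) (at z)"
    by (rule has_derivative_mult[OF Df(1) Dg(1)])
  with Df(2) Dg(2)
  show "\<exists>D. ((\<lambda>z. f z * g z) has_derivative D) (at z) \<and> (\<forall>c x. D (c *s x) = c * D x)"
    by (auto simp: algebra_simps)
qed

lemma hol_sc_inverse:
  assumes "hol_sc U f" "\<And>z. z \<in> U \<Longrightarrow> f z \<noteq> 0"
  shows "hol_sc U (\<lambda>z. inverse (f z))"
  unfolding hol_sc_def
proof
  fix z assume z: "z \<in> U"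
  with assms obtain Df where Df: "(f has_derivative Df) (at z)" "\<forall>c x. Df (c *s x) = c * Df x"
    unfolding hol_sc_def by meson
  have "((\<lambda>z. inverse (f z)) has_derivative (\<lambda>x. - (inverse (f z) * Df x * inverse (f z)))) (at z)"
    using assms(2)[OF z] by (rule Deriv.has_derivative_inverse[OF _ Df(1)])
  with Df(2)
  show "\<exists>D. ((\<lambda>z. inverse (f z)) has_derivative D) (at z) \<and> (\<forall>c x. D (c *s x) = c * D x)"
    by (auto simp: algebra_simps)
qed

lemma hol_sc_divide:
  assumes "hol_sc U f" "hol_sc U g" "\<And>z. z \<in> U \<Longrightarrow> g z \<noteq> 0"
  shows "hol_sc U (\<lambda>z. f z / g z)"
  using hol_sc_mult[OF assms(1) hol_sc_inverse[OF assms(2,3)]] by (simp add: divide_inverse)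

lemma hol_sc_sum:
  "finite S \<Longrightarrow> (\<And>s. s \<in> S \<Longrightarrow> hol_sc U (F s)) \<Longrightarrow> hol_sc U (\<lambda>z. \<Sum>s\<in>S. F s z)"
  by (induction S rule: finite_induct) (auto intro: hol_sc_const hol_sc_add)

lemma hol_sc_prod:
  "finite S \<Longrightarrow> (\<And>s. s \<in> S \<Longrightarrow> hol_sc U (F s)) \<Longrightarrow> hol_sc U (\<lambda>z. \<Prod>s\<in>S. F s z)"
  by (induction S rule: finite_induct) (auto intro: hol_sc_const hol_sc_mult)

lemma hol_sc_det:
  fixes M :: "complex^'n \<Rightarrow> complex^'m^'m"
  assumes "\<And>i j. hol_sc U (\<lambda>z. M z $ i $ j)"
  shows "hol_sc U (\<lambda>z. det (M z))"
  unfolding det_def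
  by (intro hol_sc_sum hol_sc_mult hol_sc_const hol_sc_prod assms) (auto simp: finite_permutations)

lemma hol_mat_solve_linear_system:
  fixes G :: "complex^'n \<Rightarrow> complex^'m^'m" and b :: "complex^'n \<Rightarrow> complex^'m"
  assumes G: "hol_mat U G" and b: "hol_vec U b" and det: "\<And>z. z \<in> U \<Longrightarrow> det (G z) \<noteq> 0"
  shows "\<exists>x. hol_vec U x \<and> (\<forall>z\<in>U. G z *v x z = b z)"
proof (intro exI conjI ballI)
  define x where
    "x z = (\<chi> k. det (\<chi> i j. if j = k then b z $ i else G z $ i $ j) / det (G z))" for z
  have "hol_sc U (\<lambda>z. if j = k then b z $ i else G z $ i $ j)" for i j k
    using G b by (cases "j = k") (simp_all add: hol_mat_def hol_vec_def)
  then show "hol_vec U x"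
    unfolding hol_vec_def x_def using G det
    by (auto intro!: hol_sc_divide hol_sc_det simp: hol_mat_def)
  show "G z *v x z = b z" if "z \<in> U" for z
    using cramer[OF det[OF that]] by (simp add: x_def)
qed

lemma det_nonzero_if_columns_span:
  fixes u :: "'m \<Rightarrow> 'a::field^'m"
  assumes span: "\<And>v. \<exists>c. v = (\<Sum>j\<in>UNIV. c j *s u j)"
  shows "det (\<chi> i j. u j $ i) \<noteq> 0"
proof -
  have "surj (\<lambda>x. (\<chi> i j. u j $ i) *v x)"
  proof (rule surjI)
    fix v :: "'a^'m"
    show "(\<chi> i j. u j $ i) *v (\<chi> j. (SOME c. v = (\<Sum>j\<in>UNIV. c j *s u j)) j) = v"
      using someI_ex[OF span[of v]] by (simp add: matrix_mult_sum column_def)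
  qed
  then have "invertible (\<chi> i j. u j $ i)"
    unfolding invertible_right_inverse matrix_right_invertible_surjective .
  then show ?thesis
    by (simp add: invertible_det_nz)
qed

lemma quasi_free_hol_vec:
  assumes "quasi_free \<Omega> R ip" "h \<in> R"
  shows "hol_vec \<Omega> h"
proof -
  have "\<forall>h\<in>R. hol_vec \<Omega> h \<and> (\<forall>z. z \<notin> \<Omega> \<longrightarrow> h z = 0)"
    using assms(1) unfolding quasi_free_def by (elim conjE) assumption
  with assms(2) show ?thesis
    by blast
qed

lemma quasi_free_zero: "quasi_free \<Omega> R ip \<Longrightarrow> (\<lambda>z. 0) \<in> R"
  unfolding quasi_free_def by (elim conjE) assumption

lemma quasi_free_add [rule_format]:
  "quasi_free \<Omega> R ip \<Longrightarrow> \<forall>f\<in>R. \<forall>g\<in>R. (\<lambda>z. f z + g z) \<in> R"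
  unfolding quasi_free_def by (elim conjE) assumption

lemma quasi_free_scale [rule_format]:
  "quasi_free \<Omega> R ip \<Longrightarrow> \<forall>f\<in>R. \<forall>a::complex. (\<lambda>z. a *s f z) \<in> R"
  unfolding quasi_free_def by (elim conjE) assumption

lemma quasi_free_diff:
  assumes "quasi_free \<Omega> R ip" "f \<in> R" "g \<in> R"
  shows "(\<lambda>z. f z - g z) \<in> R"
proof -
  have "(\<lambda>z. f z + (-1) *s g z) \<in> R"
    using assms by (intro quasi_free_add quasi_free_scale)
  moreover have "(\<lambda>z. f z + (-1) *s g z) = (\<lambda>z. f z - g z)"
    by (auto simp: vec_eq_iff)
  ultimately show ?thesis by simp
qed

lemma quasi_free_sum:
  fixes k :: nat
  shows "quasi_free \<Omega> R ip \<Longrightarrow> (\<And>l. l < k \<Longrightarrow> F l \<in> R) \<Longrightarrow> (\<lambda>z. \<Sum>l<k. F l z) \<in> R"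
  by (induction k) (auto intro: quasi_free_zero quasi_free_add)

lemma quasi_free_mult:
  assumes "quasi_free \<Omega> R ip" "\<phi> \<in> alg_A \<Omega>" "h \<in> R"
  shows "mult \<Omega> \<phi> h \<in> R"
proof -
  have "\<forall>\<phi>\<in>alg_A \<Omega>. \<forall>h\<in>R. mult \<Omega> \<phi> h \<in> R \<and> hnorm ip (mult \<Omega> \<phi> h) \<le> normA \<Omega> \<phi> * hnorm ip h"
    using assms(1) unfolding quasi_free_def by (elim conjE) assumption
  with assms(2,3) show ?thesis
    by blast
qed

lemma quasi_free_alg_tensor: "quasi_free \<Omega> R ip \<Longrightarrow> alg_tensor \<Omega> \<subseteq> R"
  unfolding quasi_free_def by (elim conjE) assumption

lemma quasi_free_hnorm_nonneg:
  assumes "quasi_free \<Omega> R ip" "h \<in> R"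
  shows "0 \<le> hnorm ip h"
proof -
  have "\<forall>f\<in>R. Im (ip f f) = 0 \<and> Re (ip f f) \<ge> 0"
    using assms(1) unfolding quasi_free_def by (elim conjE) assumption
  with assms(2) show ?thesis
    by (simp add: hnorm_def)
qed

lemma quasi_free_eval_bound:
  assumes qf: "quasi_free \<Omega> R ip" and z: "z \<in> \<Omega>"
  obtains C where "C \<ge> 0" "\<And>h. h \<in> R \<Longrightarrow> norm (h z) \<le> C * hnorm ip h"
proof -
  have "\<forall>z\<in>\<Omega>. \<exists>r>0. \<exists>C. \<forall>w\<in>\<Omega> \<inter> ball z r. \<forall>h\<in>R. norm (h w) \<le> C * hnorm ip h"
    using qf unfolding quasi_free_def by (elim conjE)
  then obtain r C where "r > 0" and C: "\<forall>w\<in>\<Omega> \<inter> ball z r. \<forall>h\<in>R. norm (h w) \<le> C * hnorm ip h"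
    using z by blast
  then have "norm (h z) \<le> C * hnorm ip h" if "h \<in> R" for h
    using z that by auto
  moreover have "C * hnorm ip h \<le> max C 0 * hnorm ip h" if "h \<in> R" for h
    using quasi_free_hnorm_nonneg[OF qf that] by (intro mult_right_mono) auto
  ultimately show ?thesis
    using that[of "max C 0"] by (meson max.cobounded2 order_trans)
qed

lemma loc_sub_vanishes:
  assumes qf: "quasi_free \<Omega> R ip" and z: "z \<in> \<Omega>" and h: "h \<in> loc_sub \<Omega> R ip z"
  shows "h z = 0"
proof -
  obtain C where C: "C \<ge> 0" "\<And>h. h \<in> R \<Longrightarrow> norm (h z) \<le> C * hnorm ip h"
    using quasi_free_eval_bound[OF qf z] by blast
  have hR: "h \<in> R"
    using h by (simp add: loc_sub_def)
  have "norm (h z) \<le> 0 + e" if e: "e > 0" for e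
  proof -
    have "e / (C + 1) > 0"
      using e C(1) by simp
    then obtain k :: nat and \<phi>s hs where
      H: "\<forall>l<k. \<phi>s l \<in> alg_A \<Omega> \<and> \<phi>s l z = 0 \<and> hs l \<in> R" and
      approx: "hnorm ip (\<lambda>w. h w - (\<Sum>l<k. mult \<Omega> (\<phi>s l) (hs l) w)) < e / (C + 1)"
      using h unfolding loc_sub_def by blast
    define p where "p w = (\<Sum>l<k. mult \<Omega> (\<phi>s l) (hs l) w)" for w
    have "p \<in> R"
      using H unfolding p_def by (intro quasi_free_sum[OF qf] quasi_free_mult[OF qf]) auto
    have "p z = 0"
      using H z by (simp add: p_def mult_def)
    then have "norm (h z) = norm (h z - p z)"
      by simp
    also have "\<dots> \<le> C * hnorm ip (\<lambda>w. h w - p w)"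
      using C(2)[OF quasi_free_diff[OF qf hR \<open>p \<in> R\<close>]] by simp
    also have "\<dots> \<le> C * (e / (C + 1))"
      using approx C(1) unfolding p_def by (intro mult_left_mono) auto
    also have "\<dots> \<le> e"
      using C(1) e by (simp add: field_simps)
    finally show ?thesis
      by simp
  qed
  then have "norm (h z) \<le> 0"
    by (rule field_le_epsilon)
  then show ?thesis
    by simp
qed

lemma const_in_alg_A: "(\<lambda>z. c) \<in> alg_A \<Omega>"
  unfolding alg_A_def by (auto intro!: exI[of _ "\<lambda>k z. c"] exI[of _ UNIV] hol_sc_const)

lemma generating_set_mem: "generating_set \<Omega> R ip f \<Longrightarrow> f i \<in> R"
  unfolding generating_set_def by (elim conjE) simp

lemma generating_set_fibre_span:
  fixes g :: "'m \<Rightarrow> (complex^'n \<Rightarrow> complex^'m)"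
  assumes qf: "quasi_free \<Omega> R ip" and gs: "generating_set \<Omega> R ip g" and z: "z \<in> \<Omega>"
  shows "\<exists>c. v = (\<Sum>j\<in>UNIV. c j *s g j z)"
proof -
  define h where "h w = (if w \<in> \<Omega> then v else 0)" for w
  have "h \<in> alg_tensor \<Omega>"
    unfolding alg_tensor_def h_def by (auto intro!: exI[of _ "\<lambda>i w. v $ i"] const_in_alg_A)
  then have "h \<in> R"
    using quasi_free_alg_tensor[OF qf] by blast
  then obtain c where "(\<lambda>w. h w - (\<Sum>j\<in>UNIV. c j *s g j w)) \<in> loc_sub \<Omega> R ip z"
    using gs z unfolding generating_set_def by meson
  then have "h z - (\<Sum>j\<in>UNIV. c j *s g j z) = 0"
    using loc_sub_vanishes[OF qf z] by blast
  then show ?thesis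
    using z by (auto simp: h_def vec_eq_iff)
qed

lemma module_map_mem [rule_format]: "module_map \<Omega> R ip R' ip' X \<Longrightarrow> \<forall>h\<in>R. X h \<in> R'"
  unfolding module_map_def by (elim conjE) assumption

theorem lemma5:
  fixes \<Omega> :: "(complex^'n) set"
    and R R' :: "(complex^'n \<Rightarrow> complex^'m) set"
    and ip ip' :: "(complex^'n \<Rightarrow> complex^'m) \<Rightarrow> (complex^'n \<Rightarrow> complex^'m) \<Rightarrow> complex"
    and f g :: "'m \<Rightarrow> (complex^'n \<Rightarrow> complex^'m)"
    and X :: "(complex^'n \<Rightarrow> complex^'m) \<Rightarrow> (complex^'n \<Rightarrow> complex^'m)"
  assumes "bounded_domain \<Omega>"
    and "quasi_free \<Omega> R ip" and "quasi_free \<Omega> R' ip'"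
    and "generating_set \<Omega> R ip f" and "generating_set \<Omega> R' ip' g"
    and "module_map \<Omega> R ip R' ip' X"
  shows "\<exists>\<Psi> :: complex^'n \<Rightarrow> complex^'m^'m. hol_mat \<Omega> \<Psi> \<and>
           (\<forall>i. \<forall>z\<in>\<Omega>. X (f i) z = (\<Sum>j\<in>UNIV. \<Psi> z $ i $ j *s g j z))"
proof -
  define G :: "complex^'n \<Rightarrow> complex^'m^'m" where "G z = (\<chi> a b. g b z $ a)" for z
  have G_mult: "G z *v x = (\<Sum>j\<in>UNIV. x $ j *s g j z)" for z x
    by (simp add: matrix_mult_sum column_def G_def)
  have "hol_mat \<Omega> G"
    using quasi_free_hol_vec[OF assms(3) generating_set_mem[OF assms(5)]]
    by (simp add: hol_mat_def hol_vec_def G_def)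
  moreover have "det (G z) \<noteq> 0" if "z \<in> \<Omega>" for z
    unfolding G_def
    by (rule det_nonzero_if_columns_span) (rule generating_set_fibre_span[OF assms(3,5) that])
  moreover have "hol_vec \<Omega> (X (f i))" for i
    using assms(2-4,6) by (meson quasi_free_hol_vec module_map_mem generating_set_mem)
  ultimately have "\<forall>i. \<exists>x. hol_vec \<Omega> x \<and> (\<forall>z\<in>\<Omega>. G z *v x z = X (f i) z)"
    by (blast intro: hol_mat_solve_linear_system)
  then obtain x where x: "\<And>i. hol_vec \<Omega> (x i)" "\<And>i z. z \<in> \<Omega> \<Longrightarrow> G z *v x i z = X (f i) z"
    by metis
  show ?thesis
  proof (intro exI conjI allI ballI)
    show "hol_mat \<Omega> (\<lambda>z. \<chi> i j. x i z $ j)"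
      using x(1) by (simp add: hol_mat_def hol_vec_def)
    show "X (f i) z = (\<Sum>j\<in>UNIV. (\<chi> i j. x i z $ j) $ i $ j *s g j z)" if "z \<in> \<Omega>" for i z
      using x(2)[OF that] by (simp add: G_mult)
  qed
qed

end
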